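(* Let $x,y,z,a,b,c\ge 0$ be reals with $x^2+y^2+z^2=a^2+b^2+c^2$ and $x^3+y^3+z^3=a^3+b^3+c^3$. Then \[ (x,y,z,-z,-y,-x)\succ_4(a,b,c,-c,-b,-a) \] if and only if $\max(x,y,z)\ge\max(a,b,c)$.
   Context: For $u,v\in\mathbb{R}^n$, $u\succ_4 v$ means $\sum_{i=1}^n f(u_i)\ge\sum_{i=1}^n f(v_i)$ for every four times differentiable $f:\mathbb{R}\to\mathbb{R}$ with $f^{(4)}\ge 0$. *)

theory Defs
  imports "HOL-Analysis.Analysis"
begin

definition four_convex :: "(real \<Rightarrow> real) \<Rightarrow> bool" where
  "four_convex f \<longleftrightarrow> (\<exists>f1 f2 f3 f4 :: real \<Rightarrow> real.
      (\<forall>t. (f has_real_derivative f1 t) (at t)) \<and>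
      (\<forall>t. (f1 has_real_derivative f2 t) (at t)) \<and>
      (\<forall>t. (f2 has_real_derivative f3 t) (at t)) \<and>
      (\<forall>t. (f3 has_real_derivative f4 t) (at t)) \<and>
      (\<forall>t. f4 t \<ge> 0))"

definition maj4 :: "real list \<Rightarrow> real list \<Rightarrow> bool" where
  "maj4 u v \<longleftrightarrow> length u = length v \<and>
     (\<forall>f. four_convex f \<longrightarrow> (\<Sum>i<length u. f (u ! i)) \<ge> (\<Sum>i<length v. f (v ! i)))"

end

theory Submission
  imports Defs
begin

(* Necessity: the truncated power t |-> max(t - m, 0)^5 has nonnegative fourth derivative;
   testing the majorization with it for m = max(x,y,z) forces a, b, c <= m.

   Sufficiency: Taylor's formula of order 3 with remainder expressed through the truncated
   cubic max(p - r, 0)^3 shows that a finite family u majorizes v to order 4 as soon as u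
   and v have the same first three power sums and the truncated cubic sums of u dominate
   those of v at every threshold r (four_convex_sum_le).  For the symmetrised six-tuples
   the power sums agree, and negative thresholds reduce to nonnegative ones by reflection.
   For a threshold s >= 0 and sorted triples we first derive the interlacing
   c <= z <= y <= b <= a <= x, and then compare the auxiliary function
   phi(v) = max(v - s, 0)^3 - A v^3 - B v^2, whose sums over the two triples differ exactly
   as the truncated cubic sums do; A and B are chosen so that phi increases on [a, x] and
   [c, z] and decreases on [y, b]. *)

definition tpow :: "nat \<Rightarrow> real \<Rightarrow> real \<Rightarrow> real" where
  "tpow k s v = (max (v - s) 0) ^ k"

lemma tpow_below: "v \<le> s \<Longrightarrow> 0 < k \<Longrightarrow> tpow k s v = 0"
  by (simp add: tpow_def max_def)

lemma tpow_above: "s \<le> v \<Longrightarrow> tpow k s v = (v - s) ^ k"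
  by (simp add: tpow_def max_def)

lemma tpow_nonneg: "0 \<le> tpow k s v"
  by (simp add: tpow_def)

lemma tpow_mono: "v \<le> w \<Longrightarrow> tpow k s v \<le> tpow k s w"
  unfolding tpow_def by (intro power_mono) auto

lemma has_real_derivative_glue:
  fixes f g f' g' :: "real \<Rightarrow> real"
  assumes f: "\<And>r. (f has_real_derivative f' r) (at r)"
    and g: "\<And>r. (g has_real_derivative g' r) (at r)"
    and "f p = g p" and "f' p = g' p"
  shows "((\<lambda>r. if r \<le> p then f r else g r) has_real_derivative (if r \<le> p then f' r else g' r)) (at r)"
proof -
  have "((\<lambda>r. if r \<in> {..p} then f r else g r) has_vector_derivative
         (if r \<in> {..p} then f' r else g' r)) (at r within UNIV)"
    by (rule has_vector_derivative_If_within_closures[where T="{p<..}"])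
       (use assms in \<open>auto simp: has_real_derivative_iff_has_vector_derivative[symmetric]
                             intro: has_field_derivative_at_within\<close>)
  then show ?thesis by (simp add: has_real_derivative_iff_has_vector_derivative)
qed

lemma tpow_has_derivative:
  assumes "1 \<le> k"
  shows "(tpow (Suc k) s has_real_derivative of_nat (Suc k) * tpow k s v) (at v)"
proof -
  have "((\<lambda>r. if r \<le> s then 0 else (r - s) ^ Suc k) has_real_derivative
          (if v \<le> s then 0 else of_nat (Suc k) * (v - s) ^ k)) (at v)"
    by (rule has_real_derivative_glue)
       (use assms in \<open>auto intro!: derivative_eq_intros simp: algebra_simps power_Suc2[symmetric]
                        simp del: power_Suc elim!: Suc_le_D[THEN exE]\<close>)
  moreover have "(\<lambda>r. if r \<le> s then 0 else (r - s) ^ Suc k) = tpow (Suc k) s"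
    by (auto simp: tpow_def max_def)
  moreover have "(if v \<le> s then 0 else of_nat (Suc k) * (v - s) ^ k) = of_nat (Suc k) * tpow k s v"
    using assms by (auto simp: tpow_def max_def)
  ultimately show ?thesis by simp
qed

lemma four_convex_tpow5: "four_convex (tpow 5 s)"
  unfolding four_convex_def
proof (intro exI conjI allI)
  fix t
  show "(tpow 5 s has_real_derivative 5 * tpow 4 s t) (at t)"
    using tpow_has_derivative[of 4 s t] by simp
  show "((\<lambda>t. 5 * tpow 4 s t) has_real_derivative 20 * tpow 3 s t) (at t)"
    using DERIV_cmult[OF tpow_has_derivative[of 3 s t], of 5] by simp
  show "((\<lambda>t. 20 * tpow 3 s t) has_real_derivative 60 * tpow 2 s t) (at t)"
    using DERIV_cmult[OF tpow_has_derivative[of 2 s t], of 20] by simp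
  show "((\<lambda>t. 60 * tpow 2 s t) has_real_derivative 120 * tpow 1 s t) (at t)"
    using DERIV_cmult[OF tpow_has_derivative[of 1 s t], of 60] by (simp add: numeral_2_eq_2)
  show "0 \<le> 120 * tpow 1 s t" by (simp add: tpow_nonneg)
qed

(* Necessity part: order-4 majorization can only lower the maximum, since the quintic
   truncated power with threshold m vanishes on u but not above m. *)
lemma maj4_bounded_above:
  assumes maj: "maj4 u v" and u_le: "\<forall>p\<in>set u. p \<le> m" and q: "q \<in> set v"
  shows "q \<le> m"
proof (rule ccontr)
  assume "\<not> q \<le> m"
  then have "0 < tpow 5 m q" by (simp add: tpow_def)
  also obtain j where "j < length v" "q = v ! j" using q by (auto simp: in_set_conv_nth)
  then have "tpow 5 m q \<le> (\<Sum>i<length v. tpow 5 m (v ! i))"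
    by (auto intro!: member_le_sum tpow_nonneg)
  also have "\<dots> \<le> (\<Sum>i<length u. tpow 5 m (u ! i))"
    using maj four_convex_tpow5 unfolding maj4_def by blast
  also have "\<dots> = 0"
    using u_le by (auto intro!: sum.neutral tpow_below)
  finally show False by simp
qed

definition taylor3 ::
    "(real \<Rightarrow> real) \<Rightarrow> (real \<Rightarrow> real) \<Rightarrow> (real \<Rightarrow> real) \<Rightarrow> (real \<Rightarrow> real) \<Rightarrow> real \<Rightarrow> real \<Rightarrow> real" where
  "taylor3 f f1 f2 f3 r p = f r + f1 r * (p - r) + f2 r * (p - r)^2 / 2 + f3 r * (p - r)^3 / 6"

lemma taylor3_as_cubic:
  "taylor3 f f1 f2 f3 r p =
     (f r - f1 r * r + f2 r * r^2 / 2 - f3 r * r^3 / 6) + (f1 r - f2 r * r + f3 r * r^2 / 2) * p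
     + (f2 r / 2 - f3 r * r / 2) * p^2 + f3 r / 6 * p^3"
  by (simp add: taylor3_def field_simps power2_eq_square power3_eq_cube)

lemma cubic_sum_eq:
  fixes u v :: "'a \<Rightarrow> real"
  assumes "(\<Sum>i\<in>I. u i) = (\<Sum>i\<in>I. v i)" "(\<Sum>i\<in>I. u i ^ 2) = (\<Sum>i\<in>I. v i ^ 2)"
    "(\<Sum>i\<in>I. u i ^ 3) = (\<Sum>i\<in>I. v i ^ 3)"
  shows "(\<Sum>i\<in>I. c0 + c1 * u i + c2 * u i ^ 2 + c3 * u i ^ 3)
       = (\<Sum>i\<in>I. c0 + c1 * v i + c2 * v i ^ 2 + c3 * v i ^ 3)"
  using assms by (simp add: sum.distrib sum_distrib_left[symmetric])

definition taylor3_cut ::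
    "(real \<Rightarrow> real) \<Rightarrow> (real \<Rightarrow> real) \<Rightarrow> (real \<Rightarrow> real) \<Rightarrow> (real \<Rightarrow> real) \<Rightarrow> real \<Rightarrow> real \<Rightarrow> real" where
  "taylor3_cut f f1 f2 f3 p r = (if r \<le> p then taylor3 f f1 f2 f3 r p else f p)"

(* Its r-derivative is the integrand of the Taylor remainder, f4 r * max(p - r, 0)^3 / 6. *)
lemma taylor3_cut_has_derivative:
  assumes "\<forall>t. (f has_real_derivative f1 t) (at t)" "\<forall>t. (f1 has_real_derivative f2 t) (at t)"
    "\<forall>t. (f2 has_real_derivative f3 t) (at t)" "\<forall>t. (f3 has_real_derivative f4 t) (at t)"
  shows "((\<lambda>r. taylor3_cut f f1 f2 f3 p r) has_real_derivative f4 r * tpow 3 r p / 6) (at r)"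
proof -
  have taylor: "((\<lambda>r. taylor3 f f1 f2 f3 r p) has_real_derivative f4 r * (p - r)^3 / 6) (at r)" for r
    unfolding taylor3_def
    by (auto intro!: derivative_eq_intros assms[rule_format]
             simp: field_simps power2_eq_square power3_eq_cube)
  have "((\<lambda>r. if r \<le> p then taylor3 f f1 f2 f3 r p else f p) has_real_derivative
          (if r \<le> p then f4 r * (p - r)^3 / 6 else 0)) (at r)"
    by (rule has_real_derivative_glue[OF taylor]) (auto simp: taylor3_def)
  moreover have "(if r \<le> p then f4 r * (p - r)^3 / 6 else 0) = f4 r * tpow 3 r p / 6"
    by (simp add: tpow_def max_def)
  ultimately show ?thesis unfolding taylor3_cut_def[abs_def] by simp
qed

(* The difference of
   the truncated Taylor sums is nondecreasing in r, vanishes far left (equal moments) and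
   equals the required difference far right. *)
lemma four_convex_sum_le:
  fixes u v :: "'a \<Rightarrow> real"
  assumes "finite I"
    and m1: "(\<Sum>i\<in>I. u i) = (\<Sum>i\<in>I. v i)" and m2: "(\<Sum>i\<in>I. u i ^ 2) = (\<Sum>i\<in>I. v i ^ 2)"
    and m3: "(\<Sum>i\<in>I. u i ^ 3) = (\<Sum>i\<in>I. v i ^ 3)"
    and tpow3_le: "\<And>r. (\<Sum>i\<in>I. tpow 3 r (v i)) \<le> (\<Sum>i\<in>I. tpow 3 r (u i))"
    and "four_convex f"
  shows "(\<Sum>i\<in>I. f (v i)) \<le> (\<Sum>i\<in>I. f (u i))"
proof -
  obtain f1 f2 f3 f4 where
    d: "\<forall>t. (f has_real_derivative f1 t) (at t)" "\<forall>t. (f1 has_real_derivative f2 t) (at t)"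
       "\<forall>t. (f2 has_real_derivative f3 t) (at t)" "\<forall>t. (f3 has_real_derivative f4 t) (at t)"
    and f4: "\<forall>t. 0 \<le> f4 t"
    using \<open>four_convex f\<close> unfolding four_convex_def by blast
  let ?Q = "taylor3_cut f f1 f2 f3"
  define E where "E r = (\<Sum>i\<in>I. ?Q (u i) r) - (\<Sum>i\<in>I. ?Q (v i) r)" for r
  define R where "R = 1 + (\<Sum>i\<in>I. \<bar>u i\<bar> + \<bar>v i\<bar>)"
  have bound: "\<bar>u i\<bar> < R \<and> \<bar>v i\<bar> < R" if "i \<in> I" for i
  proof -
    have "\<bar>u i\<bar> + \<bar>v i\<bar> \<le> (\<Sum>i\<in>I. \<bar>u i\<bar> + \<bar>v i\<bar>)"
      using \<open>finite I\<close> that by (intro member_le_sum) auto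
    then show ?thesis unfolding R_def by (smt (verit) abs_ge_zero)
  qed
  have "E (-R) \<le> E R"
  proof (rule DERIV_nonneg_imp_nondecreasing[of "-R" R E])
    show "-R \<le> R" using bound by (simp add: R_def sum_nonneg)
    fix r
    have "(E has_real_derivative
            f4 r / 6 * ((\<Sum>i\<in>I. tpow 3 r (u i)) - (\<Sum>i\<in>I. tpow 3 r (v i)))) (at r)"
      unfolding E_def[abs_def]
      by (auto intro!: derivative_eq_intros taylor3_cut_has_derivative[OF d]
               simp: sum_distrib_left sum_subtractf algebra_simps)
    moreover have "0 \<le> f4 r / 6 * ((\<Sum>i\<in>I. tpow 3 r (u i)) - (\<Sum>i\<in>I. tpow 3 r (v i)))"
      using f4 tpow3_le[of r] by simp
    ultimately show "\<exists>D. (E has_real_derivative D) (at r) \<and> 0 \<le> D" by blast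
  qed
  moreover have "E (-R) = 0"
  proof -
    have "E (-R) = (\<Sum>i\<in>I. taylor3 f f1 f2 f3 (-R) (u i)) - (\<Sum>i\<in>I. taylor3 f f1 f2 f3 (-R) (v i))"
      unfolding E_def taylor3_cut_def
      by (auto intro!: arg_cong2[where f="(-)"] sum.cong dest!: bound simp: abs_less_iff)
    also have "\<dots> = 0"
      unfolding taylor3_as_cubic cubic_sum_eq[OF m1 m2 m3] by simp
    finally show ?thesis .
  qed
  moreover have "E R = (\<Sum>i\<in>I. f (u i)) - (\<Sum>i\<in>I. f (v i))"
    unfolding E_def taylor3_cut_def
    by (auto intro!: arg_cong2[where f="(-)"] sum.cong dest!: bound simp: abs_less_iff)
  ultimately show ?thesis by simp
qed

lemma cube_diff_lower:
  fixes v w :: real assumes "0 \<le> w" "w \<le> v"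
  shows "(3 * w / 2) * (v^2 - w^2) \<le> v^3 - w^3"
proof -
  have "v^3 - w^3 - (3 * w / 2) * (v^2 - w^2) = (v - w)^2 * (v + w / 2)"
    by (simp add: field_simps power2_eq_square power3_eq_cube)
  moreover have "0 \<le> (v - w)^2 * (v + w / 2)" using assms by simp
  ultimately show ?thesis by linarith
qed

lemma cube_diff_upper_strict:
  fixes v w :: real assumes "0 \<le> w" "w < v"
  shows "v^3 - w^3 < (3 * v / 2) * (v^2 - w^2)"
proof -
  have "(3 * v / 2) * (v^2 - w^2) - (v^3 - w^3) = (v - w)^2 * (v / 2 + w)"
    by (simp add: field_simps power2_eq_square power3_eq_cube)
  moreover have "0 < (v - w)^2 * (v / 2 + w)" using assms by (intro mult_pos_pos) auto
  ultimately show ?thesis by linarith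
qed

lemma interlacing:
  fixes x y z a b c :: real
  assumes s: "x \<ge> y" "y \<ge> z" "z \<ge> 0" "a \<ge> b" "b \<ge> c" "c \<ge> 0" "x \<ge> a"
    and e2: "x^2 + y^2 + z^2 = a^2 + b^2 + c^2"
    and e3: "x^3 + y^3 + z^3 = a^3 + b^3 + c^3"
  shows "c \<le> z" and "y \<le> b"
proof -
  show zc: "c \<le> z"
  proof (rule ccontr)
    assume "\<not> c \<le> z" hence cz: "z < c" by simp
    have h3: "c^3 - z^3 < (3 * c / 2) * (c^2 - z^2)" using cube_diff_upper_strict[OF s(3) cz] .
    show False
    proof (cases "b \<le> y")
      case True
      have "(3 * a / 2) * (x^2 - a^2) \<le> x^3 - a^3" using cube_diff_lower s by simp
      moreover have "(3 * c / 2) * (x^2 - a^2) \<le> (3 * a / 2) * (x^2 - a^2)"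
        using s by (intro mult_right_mono) (auto intro: power_mono)
      moreover have "(3 * b / 2) * (y^2 - b^2) \<le> y^3 - b^3" using cube_diff_lower s True by simp
      moreover have "(3 * c / 2) * (y^2 - b^2) \<le> (3 * b / 2) * (y^2 - b^2)"
        using s True by (intro mult_right_mono) (auto intro: power_mono)
      ultimately have "(3 * c / 2) * ((x^2 - a^2) + (y^2 - b^2))
          < (x^3 - a^3) + (y^3 - b^3) - (c^3 - z^3) + (3 * c / 2) * (c^2 - z^2)"
        using h3 by (simp add: algebra_simps)
      moreover have "c * (x^2 + y^2 + z^2) = c * (a^2 + b^2 + c^2)" using e2 by simp
      ultimately show False using e3 by (simp add: algebra_simps)
    next
      case False
      have "(3 * a / 2) * (x^2 - a^2) \<le> x^3 - a^3" using cube_diff_lower s by simp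
      moreover have "b^3 - y^3 \<le> (3 * b / 2) * (b^2 - y^2)"
        using cube_diff_upper_strict[of y b] s False by simp
      moreover have "(3 * b / 2) * (b^2 - y^2) \<le> (3 * a / 2) * (b^2 - y^2)"
        using s False by (intro mult_right_mono) (auto intro: power_mono)
      moreover have "(3 * c / 2) * (c^2 - z^2) \<le> (3 * a / 2) * (c^2 - z^2)"
        using s cz by (intro mult_right_mono) (auto intro: power_mono)
      ultimately have "(3 * a / 2) * ((x^2 - a^2) - (b^2 - y^2) - (c^2 - z^2))
          < (x^3 - a^3) - (b^3 - y^3) - (c^3 - z^3)"
        using h3 by (simp add: algebra_simps)
      moreover have "a * (x^2 + y^2 + z^2) = a * (a^2 + b^2 + c^2)" using e2 by simp
      ultimately show False using e3 by (simp add: algebra_simps)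
    qed
  qed
  show "y \<le> b"
  proof (rule ccontr)
    assume "\<not> y \<le> b"
    hence "b^2 < y^2" using s by (intro power_strict_mono) auto
    moreover have "a^2 \<le> x^2" "c^2 \<le> z^2" using s zc by (auto intro: power_mono)
    ultimately show False using e2 by linarith
  qed
qed

(* Truncated cubic corrected by a cubic and a quadratic term; since the triples have equal
   sums of squares and cubes, the correction does not change the difference of sums. *)
definition phi :: "real \<Rightarrow> real \<Rightarrow> real \<Rightarrow> real \<Rightarrow> real" where
  "phi s A B v = tpow 3 s v - A * v^3 - B * v^2"

definition phi' :: "real \<Rightarrow> real \<Rightarrow> real \<Rightarrow> real \<Rightarrow> real" where
  "phi' s A B v = 3 * tpow 2 s v - 3 * A * v^2 - 2 * B * v"

lemma phi_has_derivative: "(phi s A B has_real_derivative phi' s A B v) (at v)"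
proof -
  have "(tpow 3 s has_real_derivative 3 * tpow 2 s v) (at v)"
    using tpow_has_derivative[of 2 s v] by simp
  then show ?thesis
    unfolding phi_def[abs_def] phi'_def by (auto intro!: derivative_eq_intros simp: power2_eq_square)
qed

lemma phi'_above: "s \<le> v \<Longrightarrow> phi' s A B v = 3 * (1 - A) * v^2 + 2 * (-3 * s - B) * v + 3 * s^2"
  by (simp add: phi'_def tpow_above power2_eq_square algebra_simps)

lemma phi'_below: "v \<le> s \<Longrightarrow> phi' s A B v = - 3 * A * v^2 - 2 * B * v"
  by (simp add: phi'_def tpow_below)

lemma phi_mono:
  assumes "l \<le> u" "\<And>v. l \<le> v \<Longrightarrow> v \<le> u \<Longrightarrow> 0 \<le> phi' s A B v"
  shows "phi s A B l \<le> phi s A B u"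
proof (rule DERIV_nonneg_imp_nondecreasing[OF assms(1)])
  fix v assume "l \<le> v" "v \<le> u"
  then show "\<exists>D. (phi s A B has_real_derivative D) (at v) \<and> 0 \<le> D"
    using phi_has_derivative assms(2) by blast
qed

lemma phi_antimono:
  assumes "l \<le> u" "\<And>v. l \<le> v \<Longrightarrow> v \<le> u \<Longrightarrow> phi' s A B v \<le> 0"
  shows "phi s A B u \<le> phi s A B l"
proof (rule DERIV_nonpos_imp_nonincreasing[OF assms(1)])
  fix v assume "l \<le> v" "v \<le> u"
  then show "\<exists>D. (phi s A B has_real_derivative D) (at v) \<and> D \<le> 0"
    using phi_has_derivative assms(2) by blast
qed

lemma phi_transfer:
  assumes "phi s A B a \<le> phi s A B x" "phi s A B b \<le> phi s A B y" "phi s A B c \<le> phi s A B z"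
    and "x^2 + y^2 + z^2 = a^2 + b^2 + c^2"
    and "x^3 + y^3 + z^3 = a^3 + b^3 + c^3"
  shows "tpow 3 s a + tpow 3 s b + tpow 3 s c \<le> tpow 3 s x + tpow 3 s y + tpow 3 s z"
proof -
  have "A * (x^3 + y^3 + z^3) = A * (a^3 + b^3 + c^3)" "B * (x^2 + y^2 + z^2) = B * (a^2 + b^2 + c^2)"
    using assms(4,5) by simp_all
  then show ?thesis using assms(1-3) unfolding phi_def by (simp add: algebra_simps)
qed

(* Interlaced triples, threshold 0 < s <= y: with K = s^2 / (y b), A = 1 - K and
   B = -3 s + 3/2 K (y + b), phi' = 3 K (v - y) (v - b) above s and phi' >= 0 on [0, s]. *)
lemma tpow3_sum_le_low_threshold:
  fixes x y z a b c s :: real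
  assumes ch: "c \<le> z" "z \<le> y" "y \<le> b" "b \<le> a" "a \<le> x" "0 \<le> c" and s: "0 < s" "s \<le> y"
    and e2: "x^2 + y^2 + z^2 = a^2 + b^2 + c^2"
    and e3: "x^3 + y^3 + z^3 = a^3 + b^3 + c^3"
  shows "tpow 3 s a + tpow 3 s b + tpow 3 s c \<le> tpow 3 s x + tpow 3 s y + tpow 3 s z"
proof -
  have y0: "0 < y" and b0: "0 < b" using ch s by auto
  define K where "K = s^2 / (y * b)"
  have Kyb: "K * y * b = s^2" using y0 b0 by (simp add: K_def)
  have K0: "0 \<le> K" using y0 b0 by (simp add: K_def)
  define A where "A = 1 - K"
  define B where "B = -3 * s + 3/2 * K * (y + b)"
  have above: "phi' s A B v = 3 * (K * ((v - y) * (v - b)))" if "s \<le> v" for v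
  proof -
    have "phi' s A B v - 3 * (K * ((v - y) * (v - b))) = 3 * (s^2 - K * y * b)"
      using that by (simp add: phi'_above A_def B_def algebra_simps power2_eq_square)
    then show ?thesis using Kyb by simp
  qed
  have below: "0 \<le> phi' s A B v" if "0 \<le> v" "v \<le> s" for v
  proof -
    define L0 where "L0 = 6 * s - 3 * K * (y + b)"
    define Ls where "Ls = 3 * s - 3 * K * (y + b) + 3 * K * s"
    have "K * y = s^2 / b" "K * b = s^2 / y" using y0 b0 by (simp_all add: K_def)
    moreover have "s^2 / b \<le> s" "s^2 / y \<le> s" using s ch y0 b0
      by (simp_all add: divide_le_eq power2_eq_square mult_left_mono)
    ultimately have "K * (y + b) \<le> 2 * s" by (simp add: algebra_simps)
    hence L0_nonneg: "0 \<le> L0" by (simp add: L0_def)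
    have "s * Ls = 3 * K * ((y - s) * (b - s))"
      using Kyb by (simp add: Ls_def algebra_simps power2_eq_square)
    moreover have "0 \<le> 3 * K * ((y - s) * (b - s))" using K0 s ch by simp
    ultimately have Ls_nonneg: "0 \<le> Ls" using s by (metis zero_le_mult_iff not_less)
    have "s * phi' s A B v = v * ((s - v) * L0 + v * Ls)"
      using that by (simp add: phi'_below A_def B_def L0_def Ls_def algebra_simps power2_eq_square)
    moreover have "0 \<le> v * ((s - v) * L0 + v * Ls)" using that L0_nonneg Ls_nonneg by simp
    ultimately have "0 \<le> s * phi' s A B v" by simp
    then show ?thesis using s by (simp add: zero_le_mult_iff)
  qed
  have small: "0 \<le> phi' s A B v" if "0 \<le> v" "v \<le> y" for v
  proof (cases "v \<le> s")
    case True then show ?thesis using below that by simp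
  next
    case False
    have "0 \<le> (v - y) * (v - b)" using that ch by (intro mult_nonpos_nonpos) auto
    then have "0 \<le> K * ((v - y) * (v - b))" using K0 by simp
    then show ?thesis using above[of v] False by linarith
  qed
  have "phi s A B a \<le> phi s A B x"
  proof (rule phi_mono)
    fix v assume "a \<le> v" "v \<le> x"
    then have "0 \<le> K * ((v - y) * (v - b))" using K0 ch by (intro mult_nonneg_nonneg) auto
    then show "0 \<le> phi' s A B v" using above[of v] \<open>a \<le> v\<close> ch s by linarith
  qed (use ch in simp)
  moreover have "phi s A B b \<le> phi s A B y"
  proof (rule phi_antimono)
    fix v assume "y \<le> v" "v \<le> b"
    then have "K * ((v - y) * (v - b)) \<le> 0" using K0 by (intro mult_nonneg_nonpos) auto
    then show "phi' s A B v \<le> 0" using above[of v] \<open>y \<le> v\<close> s by linarith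
  qed (use ch in simp)
  moreover have "phi s A B c \<le> phi s A B z"
    using ch by (intro phi_mono small) auto
  ultimately show ?thesis using phi_transfer e2 e3 by blast
qed

(* Interlaced triples, threshold y < s < b: with A = (b - s)^2 / (b (b - y)) and
   B = -3/2 A y, phi' = 3 A v (y - v) below s and phi' = 3 (v - b) ((1 - A) v - s^2 / b)
   above s. *)
lemma tpow3_sum_le_mid_threshold:
  fixes x y z a b c s :: real
  assumes ch: "c \<le> z" "z \<le> y" "y \<le> b" "b \<le> a" "a \<le> x" "0 \<le> c" and s: "y < s" "s < b"
    and e2: "x^2 + y^2 + z^2 = a^2 + b^2 + c^2"
    and e3: "x^3 + y^3 + z^3 = a^3 + b^3 + c^3"
  shows "tpow 3 s a + tpow 3 s b + tpow 3 s c \<le> tpow 3 s x + tpow 3 s y + tpow 3 s z"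
proof -
  have b0: "0 < b" and by0: "0 < b - y" and s0: "0 < s" using ch s by auto
  define A where "A = (b - s)^2 / (b * (b - y))"
  define B where "B = -3/2 * A * y"
  have Ab: "A * b * (b - y) = (b - s)^2" using b0 by0 by (simp add: A_def)
  have A0: "0 \<le> A" using b0 by0 by (simp add: A_def)
  have above: "phi' s A B v = 3 * ((v - b) * ((1 - A) * v - s^2 / b))" if "s \<le> v" for v
  proof -
    have "b * (phi' s A B v - 3 * ((v - b) * ((1 - A) * v - s^2 / b)))
          = 3 * v * ((b - s)^2 - A * b * (b - y))"
      using b0 that by (simp add: phi'_above B_def field_simps power2_eq_square)
    then show ?thesis using Ab b0 by simp
  qed
  have below: "phi' s A B v = 3 * A * v * (y - v)" if "v \<le> s" for v
    using that by (simp add: phi'_below B_def algebra_simps power2_eq_square)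
  have A_le: "s / b \<le> 1 - A"
  proof -
    have "A * b * (b - y) \<le> (b - s) * (b - y)"
      unfolding Ab using s by (simp add: power2_eq_square mult_left_mono)
    hence "A * b \<le> b - s" using by0 by simp
    thus ?thesis using b0 by (simp add: field_simps)
  qed
  have factor_nonneg: "0 \<le> (1 - A) * v - s^2 / b" if "s \<le> v" for v
  proof -
    have "0 \<le> 1 - A" using A_le s0 b0 by (smt (verit) divide_pos_pos)
    hence "(1 - A) * s \<le> (1 - A) * v" using that by (intro mult_left_mono)
    moreover have "(s / b) * s \<le> (1 - A) * s" using mult_right_mono[OF A_le, of s] s0 by simp
    ultimately show ?thesis by (simp add: power2_eq_square)
  qed
  have "phi s A B a \<le> phi s A B x"
  proof (rule phi_mono)
    fix v assume "a \<le> v" "v \<le> x"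
    then have "0 \<le> (v - b) * ((1 - A) * v - s^2 / b)"
      using factor_nonneg[of v] ch s by (intro mult_nonneg_nonneg) auto
    then show "0 \<le> phi' s A B v" using above[of v] \<open>a \<le> v\<close> ch s by linarith
  qed (use ch in simp)
  moreover have "phi s A B b \<le> phi s A B y"
  proof (rule phi_antimono)
    fix v assume v: "y \<le> v" "v \<le> b"
    show "phi' s A B v \<le> 0"
    proof (cases "v \<le> s")
      case True
      then show ?thesis using below[of v] A0 v ch by (simp add: mult_nonneg_nonpos)
    next
      case False
      have "(v - b) * ((1 - A) * v - s^2 / b) \<le> 0"
        using factor_nonneg[of v] False v by (intro mult_nonpos_nonneg) auto
      then show ?thesis using above[of v] False by linarith
    qed
  qed (use ch in simp)
  moreover have "phi s A B c \<le> phi s A B z"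
  proof (rule phi_mono)
    fix v assume "c \<le> v" "v \<le> z"
    then show "0 \<le> phi' s A B v" using below[of v] A0 ch s by simp
  qed (use ch in simp)
  ultimately show ?thesis using phi_transfer e2 e3 by blast
qed

(* Truncated cubic comparison for sorted triples and any threshold s >= 0; s = 0 is the
   equality of cubes and s >= b leaves only a <= x to compare. *)
lemma tpow3_sum_le_sorted:
  fixes x y z a b c s :: real
  assumes so: "y \<le> x" "z \<le> y" "0 \<le> z" "b \<le> a" "c \<le> b" "0 \<le> c" "a \<le> x" and "0 \<le> s"
    and e2: "x^2 + y^2 + z^2 = a^2 + b^2 + c^2"
    and e3: "x^3 + y^3 + z^3 = a^3 + b^3 + c^3"
  shows "tpow 3 s a + tpow 3 s b + tpow 3 s c \<le> tpow 3 s x + tpow 3 s y + tpow 3 s z"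
proof -
  have ch: "c \<le> z" "z \<le> y" "y \<le> b" "b \<le> a" "a \<le> x" "0 \<le> c"
    using interlacing[OF so e2 e3] so by auto
  consider "s = 0" | "0 < s" "s \<le> y" | "y < s" "s < b" | "b \<le> s"
    using \<open>0 \<le> s\<close> by linarith
  then show ?thesis
  proof cases
    case 1
    then have "tpow 3 s v = v^3" if "0 \<le> v" for v using that by (simp add: tpow_above)
    then show ?thesis using so e3 by simp
  next
    case 2
    then show ?thesis using tpow3_sum_le_low_threshold[OF ch] e2 e3 by blast
  next
    case 3
    then show ?thesis using tpow3_sum_le_mid_threshold[OF ch] e2 e3 by blast
  next
    case 4
    then have "tpow 3 s b = 0" "tpow 3 s c = 0" "tpow 3 s y = 0" "tpow 3 s z = 0"
      using ch by (auto intro!: tpow_below)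
    moreover have "tpow 3 s a \<le> tpow 3 s x" using so by (intro tpow_mono)
    ultimately show ?thesis by simp
  qed
qed

lemma sort_three:
  fixes x y z :: real
  obtains x' y' z' where "\<And>h :: real \<Rightarrow> real. h x + h y + h z = h x' + h y' + h z'"
    "y' \<le> x'" "z' \<le> y'" "x' = max x (max y z)" "z' = min x (min y z)"
proof -
  consider "y \<le> x" "z \<le> y" | "z \<le> x" "y \<le> z" | "x \<le> y" "z \<le> x"
    | "z \<le> y" "x \<le> z" | "x \<le> z" "y \<le> x" | "y \<le> z" "x \<le> y"
    by linarith
  then show ?thesis
  proof cases
    case 1 thus ?thesis by (intro that[of x y z]) (auto simp: max_def min_def ac_simps)
  next
    case 2 thus ?thesis by (intro that[of x z y]) (auto simp: max_def min_def ac_simps)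
  next
    case 3 thus ?thesis by (intro that[of y x z]) (auto simp: max_def min_def ac_simps)
  next
    case 4 thus ?thesis by (intro that[of y z x]) (auto simp: max_def min_def ac_simps)
  next
    case 5 thus ?thesis by (intro that[of z x y]) (auto simp: max_def min_def ac_simps)
  next
    case 6 thus ?thesis by (intro that[of z y x]) (auto simp: max_def min_def ac_simps)
  qed
qed

lemma tpow3_sum_le_nonneg_threshold:
  fixes x y z a b c s :: real
  assumes nn: "0 \<le> x" "0 \<le> y" "0 \<le> z" "0 \<le> a" "0 \<le> b" "0 \<le> c"
    and mx: "max a (max b c) \<le> max x (max y z)" and "0 \<le> s"
    and e2: "x^2 + y^2 + z^2 = a^2 + b^2 + c^2"
    and e3: "x^3 + y^3 + z^3 = a^3 + b^3 + c^3"
  shows "tpow 3 s a + tpow 3 s b + tpow 3 s c \<le> tpow 3 s x + tpow 3 s y + tpow 3 s z"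
proof -
  obtain x' y' z' where X: "\<And>h :: real \<Rightarrow> real. h x + h y + h z = h x' + h y' + h z'" "y' \<le> x'" "z' \<le> y'"
    "x' = max x (max y z)" "z' = min x (min y z)" using sort_three[of x y z] by blast
  obtain a' b' c' where A: "\<And>h :: real \<Rightarrow> real. h a + h b + h c = h a' + h b' + h c'" "b' \<le> a'" "c' \<le> b'"
    "a' = max a (max b c)" "c' = min a (min b c)" using sort_three[of a b c] by blast
  have "tpow 3 s a' + tpow 3 s b' + tpow 3 s c' \<le> tpow 3 s x' + tpow 3 s y' + tpow 3 s z'"
  proof (rule tpow3_sum_le_sorted)
    show "0 \<le> z'" "0 \<le> c'" using X(5) A(5) nn by auto
    show "a' \<le> x'" using X(4) A(4) mx by simp
    show "x'^2 + y'^2 + z'^2 = a'^2 + b'^2 + c'^2"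
      using e2 X(1)[of "\<lambda>v. v^2"] A(1)[of "\<lambda>v. v^2"] by simp
    show "x'^3 + y'^3 + z'^3 = a'^3 + b'^3 + c'^3"
      using e3 X(1)[of "\<lambda>v. v^3"] A(1)[of "\<lambda>v. v^3"] by simp
  qed (use X(2,3) A(2,3) \<open>0 \<le> s\<close> in auto)
  then show ?thesis using X(1)[of "tpow 3 s"] A(1)[of "tpow 3 s"] by simp
qed

lemma tpow3_reflect:
  fixes s t :: real assumes "0 \<le> t" "0 < s"
  shows "tpow 3 (-s) t + tpow 3 (-s) (-t) = 2 * s^3 + 6 * s * t^2 + tpow 3 s t"
  using assms
  by (cases "s \<le> t") (simp_all add: tpow_def max_def power2_eq_square power3_eq_cube algebra_simps)

lemma tpow3_sum_le_symmetric:
  fixes x y z a b c r :: real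
  assumes nn: "0 \<le> x" "0 \<le> y" "0 \<le> z" "0 \<le> a" "0 \<le> b" "0 \<le> c"
    and mx: "max a (max b c) \<le> max x (max y z)"
    and e2: "x^2 + y^2 + z^2 = a^2 + b^2 + c^2"
    and e3: "x^3 + y^3 + z^3 = a^3 + b^3 + c^3"
  shows "tpow 3 r a + tpow 3 r b + tpow 3 r c + tpow 3 r (-c) + tpow 3 r (-b) + tpow 3 r (-a)
       \<le> tpow 3 r x + tpow 3 r y + tpow 3 r z + tpow 3 r (-z) + tpow 3 r (-y) + tpow 3 r (-x)"
proof (cases "0 \<le> r")
  case True
  have "tpow 3 r (-v) = 0" if "0 \<le> v" for v using that True by (intro tpow_below) simp_all
  then show ?thesis using tpow3_sum_le_nonneg_threshold[OF nn mx True e2 e3] nn by simp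
next
  case False
  define s where "s = -r"
  have s0: "0 < s" and r: "r = -s" using False by (simp_all add: s_def)
  have "6 * s * (x^2 + y^2 + z^2) = 6 * s * (a^2 + b^2 + c^2)" using e2 by simp
  then show ?thesis unfolding r
    using tpow3_sum_le_nonneg_threshold[OF nn mx less_imp_le[OF s0] e2 e3]
      tpow3_reflect[OF nn(1) s0] tpow3_reflect[OF nn(2) s0] tpow3_reflect[OF nn(3) s0]
      tpow3_reflect[OF nn(4) s0] tpow3_reflect[OF nn(5) s0] tpow3_reflect[OF nn(6) s0]
    by (simp add: algebra_simps)
qed

lemma sum_six:
  "(\<Sum>i<6. (g :: real \<Rightarrow> real) ([p1, p2, p3, p4, p5, p6] ! i))
     = g p1 + g p2 + g p3 + g p4 + g p5 + g p6"
  by (simp add: lessThan_Suc numeral_eq_Suc)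

theorem mainTheorem20:
  fixes x y z a b c :: real
  assumes "x \<ge> 0" "y \<ge> 0" "z \<ge> 0" "a \<ge> 0" "b \<ge> 0" "c \<ge> 0"
    and "x^2 + y^2 + z^2 = a^2 + b^2 + c^2"
    and "x^3 + y^3 + z^3 = a^3 + b^3 + c^3"
  shows "maj4 [x, y, z, -z, -y, -x] [a, b, c, -c, -b, -a]
           \<longleftrightarrow> max x (max y z) \<ge> max a (max b c)"
proof
  assume maj: "maj4 [x, y, z, -z, -y, -x] [a, b, c, -c, -b, -a]"
  have "\<forall>p\<in>set [x, y, z, -z, -y, -x]. p \<le> max x (max y z)" using assms by auto
  then have "\<forall>q\<in>set [a, b, c, -c, -b, -a]. q \<le> max x (max y z)"
    using maj4_bounded_above[OF maj] by blast
  then show "max x (max y z) \<ge> max a (max b c)" by simp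
next
  assume mx: "max x (max y z) \<ge> max a (max b c)"
  let ?u = "\<lambda>i. [x, y, z, -z, -y, -x] ! i" and ?v = "\<lambda>i. [a, b, c, -c, -b, -a] ! i"
  have "(\<Sum>i<6. f (?v i)) \<le> (\<Sum>i<6. f (?u i))" if "four_convex f" for f
  proof (rule four_convex_sum_le[OF _ _ _ _ _ that])
    show "(\<Sum>i<6. tpow 3 r (?v i)) \<le> (\<Sum>i<6. tpow 3 r (?u i))" for r
      unfolding sum_six using tpow3_sum_le_symmetric[OF assms(1-6) mx assms(7,8)] .
  qed (use assms(7) sum_six[of "\<lambda>p. p"] sum_six[of "\<lambda>p. p^2"] sum_six[of "\<lambda>p. p^3"] in simp_all)
  then show "maj4 [x, y, z, -z, -y, -x] [a, b, c, -c, -b, -a]"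
    unfolding maj4_def by (simp add: sum_six)
qed

end
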